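(* Let $n\geq 2$ be an integer, and for real $x$ let $\omega=\frac{x+\sqrt{x^2+4}}{2}$. Then $$\Psi_n(x)=\begin{cases}-\dfrac{\Phi_n(-\omega^2)}{\omega^{\varphi(n)}}&\text{if } n=2;\\[2ex] \dfrac{\Phi_n(-\omega^2)}{\omega^{\varphi(n)}}&\text{if } n\geq 3.\end{cases}$$ Equivalently, since $\omega-\omega^{-1}=x$, $\Psi_n(\omega-\omega^{-1})$ equals the right-hand side.
   Context: The Fibonacci polynomials are defined by $F_1(x)=1$, $F_2(x)=x$, and $F_n(x)=xF_{n-1}(x)+F_{n-2}(x)$ for $n\geq 3$. For $n\geq 2$, the $n$-th fibotomic polynomial $\Psi_n(x)\in\mathbb{Z}[x]$ is the product of the monic irreducible factors of $F_n(x)$ which are not factors of $F_k(x)$ for any $k<n$; also $\Psi_1(x)=1$. Thus $F_n(x)=\prod_{d\mid n}\Psi_d(x)$ for all $n\geq1$. $\Phi_n(x)$ denotes the $n$-th cyclotomic polynomial and $\varphi$ is Euler's totient function. *)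

theory Defs
  imports Complex_Main "HOL-Computational_Algebra.Computational_Algebra" "HOL-Number_Theory.Number_Theory"
begin

fun fib_poly :: "nat \<Rightarrow> int poly" where
  "fib_poly 0 = 0"
| "fib_poly (Suc 0) = 1"
| "fib_poly (Suc (Suc n)) = [:0, 1:] * fib_poly (Suc n) + fib_poly n"

definition fibotomic :: "nat \<Rightarrow> rat poly" where
  "fibotomic n = \<Prod>{p :: rat poly. lead_coeff p = 1 \<and> irreducible p
      \<and> p dvd map_poly of_int (fib_poly n)
      \<and> (\<forall>k. 1 \<le> k \<and> k < n \<longrightarrow> \<not> p dvd map_poly of_int (fib_poly k))}"

definition cyclotomic :: "nat \<Rightarrow> complex poly" where
  "cyclotomic n = (\<Prod>k \<in> {k. 1 \<le> k \<and> k \<le> n \<and> coprime k n}.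
      [:- cis (2 * pi * real k / real n), 1:])"

end

(* Since i sin t * F_m(2i cos t) = i^m sin(m t), the Fibonacci polynomial F_n is the product of
   the n - 1 distinct linear factors X - 2i cos(k pi/n), 0 < k < n, and 2i cos(k pi/n) is a root of
   F_j exactly when n divides j k.  Hence a monic irreducible rational factor of F_n divides no
   earlier F_j precisely when its roots have k coprime to n, and over C the fibotomic polynomial is
   the product of X - 2i cos(k pi/n) over the totatives k of n.  For x = w - 1/w each factor splits
   as (w - i e^(i a))(w - i e^(-i a))/w, and pairing k with n - k turns the product into
   (-1)^phi(n) Phi_n(-w^2)/w^phi(n); the sign is +1 unless n = 2. *)

theory Submission
  imports Defs "HOL-Computational_Algebra.Field_as_Ring"
begin

lemma map_poly_add_hom:
  assumes "f 0 = 0" "\<And>a b. f (a + b) = f a + f b"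
  shows "map_poly f (p + q) = map_poly f p + map_poly f q"
  by (intro poly_eqI) (simp add: coeff_map_poly assms)

lemma map_poly_mult_hom:
  fixes f :: "'a::comm_semiring_0 \<Rightarrow> 'b::comm_semiring_0"
  assumes f0: "f 0 = 0" and fadd: "\<And>a b. f (a + b) = f a + f b"
    and fmult: "\<And>a b. f (a * b) = f a * f b"
  shows "map_poly f (p * q) = map_poly f p * map_poly f q"
proof (induction p)
  case (pCons a p)
  have "map_poly f (pCons a p * q) = map_poly f (Polynomial.smult a q) + map_poly f (pCons 0 (p * q))"
    by (simp add: map_poly_add_hom f0 fadd)
  also have "\<dots> = Polynomial.smult (f a) (map_poly f q) + pCons 0 (map_poly f p * map_poly f q)"
    by (simp add: map_poly_smult map_poly_pCons f0 fmult pCons.IH)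
  finally show ?case
    by (simp add: map_poly_pCons f0)
qed (simp add: f0)

lemma map_poly_prod_hom:
  fixes f :: "'a::comm_semiring_1 \<Rightarrow> 'b::comm_semiring_1"
  assumes "f 0 = 0" "f 1 = 1" "\<And>a b. f (a + b) = f a + f b" "\<And>a b. f (a * b) = f a * f b"
  shows "map_poly f (\<Prod>i\<in>A. g i) = (\<Prod>i\<in>A. map_poly f (g i))"
  by (induction A rule: infinite_finite_induct) (simp_all add: assms map_poly_mult_hom)

lemma poly_map_poly_hom:
  fixes f :: "'a::comm_semiring_0 \<Rightarrow> 'b::comm_semiring_0"
  assumes "f 0 = 0" "\<And>a b. f (a + b) = f a + f b" "\<And>a b. f (a * b) = f a * f b"
  shows "f (poly p x) = poly (map_poly f p) (f x)"
  by (induction p) (simp_all add: assms map_poly_pCons)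

lemma map_poly_of_rat_mult:
  "map_poly of_rat (p * q) = (map_poly of_rat p * map_poly of_rat q :: 'a::field_char_0 poly)"
  by (rule map_poly_mult_hom) (simp_all add: of_rat_add of_rat_mult)

lemma map_poly_of_rat_dvd:
  "p dvd q \<Longrightarrow> (map_poly of_rat p :: 'a::field_char_0 poly) dvd map_poly of_rat q"
  by (elim dvdE) (simp add: map_poly_of_rat_mult)

lemma of_real_of_rat: "of_real (of_rat q) = (of_rat q :: 'a::real_field)"
  by (cases q) (simp add: of_rat_rat)

lemma of_real_poly_map_poly_of_rat:
  "of_real (poly (map_poly of_rat p) x) = poly (map_poly of_rat p) (of_real x :: 'a::real_field)"
proof -
  have "of_real (poly (map_poly of_rat p) x) = poly (map_poly of_real (map_poly of_rat p)) (of_real x :: 'a)"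
    by (rule poly_map_poly_hom) simp_all
  also have "map_poly of_real (map_poly of_rat p) = (map_poly of_rat p :: 'a poly)"
    by (simp add: map_poly_map_poly o_def of_real_of_rat)
  finally show ?thesis .
qed

lemma map_poly_of_rat_of_int:
  "map_poly of_rat (map_poly of_int p) = (map_poly of_int p :: 'a::field_char_0 poly)"
  by (simp add: map_poly_map_poly o_def)

lemma prod_linear_factors_dvd:
  fixes p :: "'a::idom poly"
  assumes "finite R" "\<And>r. r \<in> R \<Longrightarrow> poly p r = 0"
  shows "(\<Prod>r\<in>R. [:-r, 1:]) dvd p"
  using assms
proof (induction R arbitrary: p rule: finite_induct)
  case (insert a R)
  obtain q where q: "p = [:-a, 1:] * q"
    using insert.prems by (meson dvdE insertI1 poly_eq_0_iff_dvd)
  have "poly q r = 0" if "r \<in> R" for r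
    using insert.hyps insert.prems[of r] that by (auto simp: q)
  then have "(\<Prod>r\<in>R. [:-r, 1:]) dvd q"
    using insert.IH by blast
  then show ?case
    using insert.hyps by (simp add: q del: mult_pCons_left)
qed simp

lemma degree_prod_linear_factors:
  "finite R \<Longrightarrow> degree (\<Prod>r\<in>R. [:-r, 1::'a::idom:]) = card R"
  by (simp add: degree_prod_sum_eq del: mult_pCons_left)

lemma monic_dvd_eq_of_degree_le:
  fixes p q :: "'a::field poly"
  assumes "p dvd q" "q \<noteq> 0" "degree q \<le> degree p" "lead_coeff p = 1" "lead_coeff q = 1"
  shows "p = q"
proof -
  obtain c where c: "q = p * c"
    using assms(1) by (elim dvdE)
  then have "p \<noteq> 0" "c \<noteq> 0"
    using assms(2) by auto
  then have "degree c = 0"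
    using assms(3) c degree_mult_eq[of p c] by simp
  then obtain a where a: "c = [:a:]"
    by (elim degree_eq_zeroE)
  have "lead_coeff q = lead_coeff p * lead_coeff c"
    by (simp add: c lead_coeff_mult)
  then have "a = 1"
    using a assms(4,5) by simp
  then show ?thesis
    using a c by simp
qed

lemma rsquarefree_prod_linear_factors:
  fixes R :: "'a::idom set"
  assumes "finite R"
  shows "rsquarefree (\<Prod>r\<in>R. [:-r, 1:])"
proof -
  have "proots (\<Prod>r\<in>R. [:-r, 1:]) = mset_set R"
    using assms by (simp add: proots_prod)
  moreover have "(\<Prod>r\<in>R. [:-r, 1:]) \<noteq> 0"
    using assms by (simp del: mult_pCons_left)
  ultimately have "Polynomial.order a (\<Prod>r\<in>R. [:-r, 1:]) = (if a \<in> R then 1 else 0)" for a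
    using count_proots[of "\<Prod>r\<in>R. [:-r, 1:]" a] assms by (cases "a \<in> R") simp_all
  then show ?thesis
    using \<open>(\<Prod>r\<in>R. [:-r, 1:]) \<noteq> 0\<close> by (simp add: rsquarefree_def)
qed

lemma rsquarefree_dvd: "rsquarefree q \<Longrightarrow> p dvd q \<Longrightarrow> rsquarefree p"
  unfolding rsquarefree_def
  by (metis dvd_0_left_iff dvd_imp_order_le le_Suc_eq le_zero_eq One_nat_def)

lemma monic_dvd_prod_linear_factors_eq:
  fixes p :: "complex poly"
  assumes "finite R" "p dvd (\<Prod>r\<in>R. [:-r, 1:])" "lead_coeff p = 1"
  shows "p = (\<Prod>r\<in>{r\<in>R. poly p r = 0}. [:-r, 1:])"
proof -
  have "rsquarefree p"
    using rsquarefree_prod_linear_factors[OF assms(1)] assms(2) by (rule rsquarefree_dvd)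
  moreover have "z \<in> R" if "poly p z = 0" for z
  proof -
    have "poly (\<Prod>r\<in>R. [:-r, 1:]) z = 0"
      using assms(2) that by auto
    then show ?thesis
      using assms(1) by (simp add: poly_prod del: mult_pCons_left)
  qed
  then have "{z. poly p z = 0} = {r\<in>R. poly p r = 0}"
    by blast
  ultimately show ?thesis
    using complex_poly_decompose_rsquarefree[of p] assms(3) by simp
qed

section \<open>Fibonacci polynomials and their complex roots\<close>

lemma fib_poly_degree_lead_coeff:
  "n > 0 \<Longrightarrow> degree (fib_poly n) = n - 1 \<and> lead_coeff (fib_poly n) = 1"
proof (induction n rule: fib_poly.induct)
  case (3 n)
  have IH: "degree (fib_poly (Suc n)) = n \<and> lead_coeff (fib_poly (Suc n)) = 1"
    using "3.IH" by (metis zero_less_Suc diff_Suc_1)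
  have deg_n: "degree (fib_poly n) \<le> n - 1"
    using "3.IH" by (cases n) simp_all
  have shift: "degree ([:0, 1:] * fib_poly (Suc n)) = Suc n"
      "lead_coeff ([:0, 1:] * fib_poly (Suc n)) = 1"
    using IH by (auto simp: degree_pCons_eq dest: leading_coeff_neq_0)
  have less: "degree (fib_poly n) < degree ([:0, 1:] * fib_poly (Suc n))"
    using deg_n shift by simp
  have rec: "fib_poly (Suc (Suc n)) = fib_poly n + [:0, 1:] * fib_poly (Suc n)"
    by (simp only: fib_poly.simps add.commute)
  show ?case
    using rec degree_add_eq_right[OF less] lead_coeff_add_le[OF less] shift by (metis diff_Suc_1)
qed simp_all

lemma degree_of_int_fib_poly:
  "degree (map_poly of_int (fib_poly n) :: 'a::comm_ring_1 poly) = n - 1"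
proof (cases "n = 0")
  case False
  then show ?thesis
    using fib_poly_degree_lead_coeff[of n] by (subst map_poly_degree_eq) auto
qed simp

lemma lead_coeff_of_int_fib_poly:
  assumes "n > 0"
  shows "lead_coeff (map_poly of_int (fib_poly n) :: 'a::comm_ring_1 poly) = 1"
proof -
  have "poly.coeff (fib_poly n) (n - 1) = 1"
    using fib_poly_degree_lead_coeff[OF assms] by auto
  then show ?thesis
    by (simp add: degree_of_int_fib_poly coeff_map_poly)
qed

lemma of_int_fib_poly_Suc_Suc:
  "(map_poly of_int (fib_poly (Suc (Suc n))) :: 'a::comm_ring_1 poly) =
     [:0, 1:] * map_poly of_int (fib_poly (Suc n)) + map_poly of_int (fib_poly n)"
  by (simp add: map_poly_add_hom map_poly_mult_hom map_poly_pCons)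

lemma sin_Suc_Suc_mult:
  "sin (real (Suc (Suc m)) * t) = 2 * cos t * sin (real (Suc m) * t) - sin (real m * t)"
proof -
  have "real (Suc (Suc m)) * t = real (Suc m) * t + t" "real m * t = real (Suc m) * t - t"
    by (simp_all add: distrib_right)
  then show ?thesis
    by (simp only: sin_add sin_diff) simp
qed

lemma poly_of_int_fib_poly_at_cos:
  "\<i> * of_real (sin t) * poly (map_poly of_int (fib_poly m)) (2 * \<i> * of_real (cos t)) =
     \<i> ^ m * of_real (sin (real m * t))"
proof -
  let ?F = "\<lambda>m. \<i> * of_real (sin t) * poly (map_poly of_int (fib_poly m)) (2 * \<i> * of_real (cos t))"
  have "?F m = \<i> ^ m * of_real (sin (real m * t)) \<and>
      ?F (Suc m) = \<i> ^ Suc m * of_real (sin (real (Suc m) * t))"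
  proof (induction m)
    case (Suc m)
    have "?F (Suc (Suc m)) = 2 * \<i> * of_real (cos t) * ?F (Suc m) + ?F m"
      unfolding of_int_fib_poly_Suc_Suc by (simp add: algebra_simps)
    also have "\<dots> = \<i> ^ m * of_real (sin (real m * t) - 2 * cos t * sin (real (Suc m) * t))"
      using Suc.IH by (simp add: algebra_simps)
    also have "\<dots> = \<i> ^ Suc (Suc m) * of_real (sin (real (Suc (Suc m)) * t))"
      unfolding sin_Suc_Suc_mult by (simp add: algebra_simps)
    finally show ?case
      using Suc.IH by simp
  qed simp
  then show ?thesis ..
qed

lemma sin_mult_pi_div_eq_0_iff:
  assumes "n > 0"
  shows "sin (real m * pi / real n) = 0 \<longleftrightarrow> n dvd m"
proof -
  have "real m * pi / real n = real_of_int i * pi \<longleftrightarrow> int m = i * int n" for i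
  proof -
    have "real m * pi / real n = real_of_int i * pi \<longleftrightarrow> real m = real_of_int i * real n"
      using assms by (simp add: field_simps)
    also have "\<dots> \<longleftrightarrow> int m = i * int n"
      by (metis of_int_eq_iff of_int_mult of_int_of_nat_eq)
    finally show ?thesis .
  qed
  then have "sin (real m * pi / real n) = 0 \<longleftrightarrow> (\<exists>i. int m = i * int n)"
    by (simp add: sin_zero_iff_int2)
  also have "\<dots> \<longleftrightarrow> int n dvd int m"
    by (auto simp: dvd_def mult.commute)
  finally show ?thesis
    by simp
qed

definition fib_poly_root :: "nat \<Rightarrow> nat \<Rightarrow> complex" where
  "fib_poly_root n k = 2 * \<i> * of_real (cos (real k * pi / real n))"

lemma poly_fib_poly_root_eq_0_iff:
  assumes "0 < k" "k < n"
  shows "poly (map_poly of_int (fib_poly j)) (fib_poly_root n k) = 0 \<longleftrightarrow> n dvd j * k"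
proof -
  define t where "t = real k * pi / real n"
  have "0 < t" "t < pi"
    using assms by (simp_all add: t_def divide_less_eq)
  then have "sin t \<noteq> 0"
    using sin_gt_zero by fastforce
  then have "poly (map_poly of_int (fib_poly j)) (fib_poly_root n k) = 0 \<longleftrightarrow> sin (real j * t) = 0"
    using poly_of_int_fib_poly_at_cos[of t j] by (auto simp: fib_poly_root_def t_def)
  also have "real j * t = real (j * k) * pi / real n"
    by (simp add: t_def)
  finally show ?thesis
    using sin_mult_pi_div_eq_0_iff[of n "j * k"] assms by simp
qed

lemma inj_on_fib_poly_root: "inj_on (fib_poly_root n) {0<..<n}"
proof
  fix k l assume k: "k \<in> {0<..<n}" and l: "l \<in> {0<..<n}"
    and "fib_poly_root n k = fib_poly_root n l"
  then have "cos (real k * pi / real n) = cos (real l * pi / real n)"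
    by (simp add: fib_poly_root_def)
  moreover have "real k * pi / real n \<le> pi" "real l * pi / real n \<le> pi"
    using k l by (simp_all add: divide_le_eq)
  ultimately have "real k * pi / real n = real l * pi / real n"
    using cos_inj_pi[of "real k * pi / real n" "real l * pi / real n"] by simp
  then show "k = l"
    using k by simp
qed

lemma of_int_fib_poly_eq_prod:
  assumes "n > 0"
  shows "(map_poly of_int (fib_poly n) :: complex poly) = (\<Prod>k\<in>{0<..<n}. [:-fib_poly_root n k, 1:])"
proof -
  let ?R = "fib_poly_root n ` {0<..<n}"
  have prod_eq: "(\<Prod>k\<in>{0<..<n}. [:-fib_poly_root n k, 1:]) = (\<Prod>r\<in>?R. [:-r, 1:])"
    by (simp add: prod.reindex[OF inj_on_fib_poly_root] del: mult_pCons_left)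
  have "(\<Prod>r\<in>?R. [:-r, 1:]) dvd (map_poly of_int (fib_poly n) :: complex poly)"
    by (rule prod_linear_factors_dvd) (auto simp: poly_fib_poly_root_eq_0_iff)
  moreover have "degree (\<Prod>r\<in>?R. [:-r, 1:]) = n - 1"
    by (simp add: degree_prod_linear_factors card_image[OF inj_on_fib_poly_root])
  moreover have "lead_coeff (\<Prod>r\<in>?R. [:-r, 1:]) = 1"
    by (simp add: lead_coeff_prod del: mult_pCons_left)
  moreover have "lead_coeff (map_poly of_int (fib_poly n) :: complex poly) = 1"
    using assms by (rule lead_coeff_of_int_fib_poly)
  ultimately show ?thesis
    unfolding prod_eq
    by (intro monic_dvd_eq_of_degree_le[symmetric]) (auto simp: degree_of_int_fib_poly)
qed

lemma prod_primes_dvd: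
  fixes x :: "'a::factorial_semiring_gcd"
  assumes "finite A" "\<And>p. p \<in> A \<Longrightarrow> prime p" "\<And>p. p \<in> A \<Longrightarrow> p dvd x"
  shows "\<Prod>A dvd x"
  using assms
proof (induction A rule: finite_induct)
  case (insert a A)
  have "coprime a (\<Prod>A)"
    by (rule prod_coprime_right) (use insert in \<open>auto intro!: primes_coprime\<close>)
  then show ?case
    using insert by (simp add: divides_mult)
qed simp

lemma irreducible_dvd_of_common_root:
  fixes p q :: "rat poly" and z :: "'a::field_char_0"
  assumes "irreducible p" "poly (map_poly of_rat p) z = 0" "poly (map_poly of_rat q) z = 0"
  shows "p dvd q"
proof (rule ccontr)
  assume "\<not> p dvd q"
  moreover have "prime_elem p"
    using assms(1) by (simp add: prime_elem_iff_irreducible)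
  ultimately have "coprime p q"
    by (simp add: prime_elem_imp_coprime)
  then have "gcd p q = 1"
    by (simp add: coprime_iff_gcd_eq_1)
  then obtain s t where "s * p + t * q = 1"
    using bezout_coefficients_fst_snd[of p q] by metis
  then have "map_poly of_rat (s * p + t * q) = (1 :: 'a poly)"
    by simp
  then have "map_poly of_rat s * map_poly of_rat p + map_poly of_rat t * map_poly of_rat q = (1 :: 'a poly)"
    by (simp add: map_poly_add_hom map_poly_of_rat_mult of_rat_add)
  then have "poly (map_poly of_rat s * map_poly of_rat p + map_poly of_rat t * map_poly of_rat q) z = 1"
    by simp
  then show False
    using assms(2,3) by simp
qed

lemma poly_map_poly_of_rat_prod_mset_eq_0:
  fixes z :: "'a::field_char_0"
  assumes "poly (map_poly of_rat (prod_mset A)) z = 0"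
  shows "\<exists>p\<in>#A. poly (map_poly of_rat p) z = 0"
  using assms by (induction A) (auto simp: map_poly_of_rat_mult)

lemma normalize_monic_poly: "lead_coeff p = 1 \<Longrightarrow> normalize p = (p :: 'a::field_gcd poly)"
  by (intro poly_eqI) simp

lemma prime_rat_poly_iff: "prime (p :: rat poly) \<longleftrightarrow> irreducible p \<and> lead_coeff p = 1"
proof (cases "p = 0")
  case False
  have "lead_coeff p = 1" if "normalize p = p"
  proof -
    have "unit_factor p * p = 1 * p"
      using unit_factor_mult_normalize[of p] that by simp
    then have "unit_factor p = 1"
      using False mult_cancel_right by blast
    then show ?thesis
      using False by (simp add: unit_factor_poly_def one_pCons)
  qed
  then show ?thesis
    by (auto simp: prime_def prime_elem_iff_irreducible normalize_monic_poly)
qed simp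

section \<open>The fibotomic polynomial over the complex numbers\<close>

definition fibotomic_factors :: "nat \<Rightarrow> rat poly set" where
  "fibotomic_factors n = {p :: rat poly. lead_coeff p = 1 \<and> irreducible p
      \<and> p dvd map_poly of_int (fib_poly n)
      \<and> (\<forall>k. 1 \<le> k \<and> k < n \<longrightarrow> \<not> p dvd map_poly of_int (fib_poly k))}"

lemma fibotomic_eq_Prod_factors: "fibotomic n = \<Prod>(fibotomic_factors n)"
  by (simp add: fibotomic_def fibotomic_factors_def)

lemma fibotomic_factors_subset_prime_factors:
  assumes "n > 0"
  shows "fibotomic_factors n \<subseteq> prime_factors (map_poly of_int (fib_poly n))"
proof -
  have "map_poly of_int (fib_poly n) \<noteq> (0 :: rat poly)"
    using lead_coeff_of_int_fib_poly[OF assms, where 'a=rat] by auto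
  then show ?thesis
    by (auto simp: fibotomic_factors_def in_prime_factors_iff prime_rat_poly_iff)
qed

lemma finite_fibotomic_factors: "n > 0 \<Longrightarrow> finite (fibotomic_factors n)"
  using fibotomic_factors_subset_prime_factors finite_set_mset by (rule finite_subset)

lemma fibotomic_dvd_of_int_fib_poly:
  assumes "n > 0"
  shows "fibotomic n dvd map_poly of_int (fib_poly n)"
  unfolding fibotomic_eq_Prod_factors
  using finite_fibotomic_factors[OF assms] fibotomic_factors_subset_prime_factors[OF assms]
  by (intro prod_primes_dvd) (auto simp: in_prime_factors_iff)

lemma lead_coeff_fibotomic: "lead_coeff (fibotomic n) = 1"
  by (simp add: fibotomic_eq_Prod_factors lead_coeff_prod fibotomic_factors_def)

lemma poly_fibotomic_eq_0_iff:
  fixes z :: "'a::field_char_0"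
  assumes "n > 0"
  shows "poly (map_poly of_rat (fibotomic n)) z = 0 \<longleftrightarrow>
           (\<exists>p\<in>fibotomic_factors n. poly (map_poly of_rat p) z = 0)"
proof -
  have "map_poly of_rat (fibotomic n) = (\<Prod>p\<in>fibotomic_factors n. map_poly of_rat p :: 'a poly)"
    unfolding fibotomic_eq_Prod_factors by (rule map_poly_prod_hom) (simp_all add: of_rat_add of_rat_mult)
  then show ?thesis
    using finite_fibotomic_factors[OF assms] by (simp add: poly_prod)
qed

lemma coprime_if_fibotomic_root:
  assumes "0 < k" "k < n" "poly (map_poly of_rat (fibotomic n)) (fib_poly_root n k) = 0"
  shows "coprime k n"
proof (rule ccontr)
  assume "\<not> coprime k n"
  then have "gcd k n \<noteq> 1"
    using coprime_iff_gcd_eq_1 by blast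
  moreover have "gcd k n \<noteq> 0"
    using assms(1) by simp
  ultimately have "gcd k n > 1"
    by linarith
  define j where "j = n div gcd k n"
  have "0 < j"
    using assms(1,2) by (simp add: j_def div_greater_zero_iff)
  have "j < n"
    using \<open>gcd k n > 1\<close> assms(1,2) by (simp add: j_def)
  have "j * k = n * (k div gcd k n)"
    by (simp add: j_def div_mult_swap mult.commute)
  then have root_j: "poly (map_poly of_int (fib_poly j)) (fib_poly_root n k) = 0"
    using assms(1,2) by (simp add: poly_fib_poly_root_eq_0_iff)
  obtain p where p: "p \<in> fibotomic_factors n" "poly (map_poly of_rat p) (fib_poly_root n k) = 0"
    using assms poly_fibotomic_eq_0_iff[of n] by auto
  have "p dvd map_poly of_int (fib_poly j)"
    using p root_j irreducible_dvd_of_common_root[of p "fib_poly_root n k"]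
    by (simp add: fibotomic_factors_def map_poly_of_rat_of_int)
  moreover have "\<not> p dvd map_poly of_int (fib_poly j)"
    using p(1) \<open>0 < j\<close> \<open>j < n\<close> by (simp add: fibotomic_factors_def)
  ultimately show False
    by blast
qed

lemma fibotomic_root_if_coprime:
  assumes "0 < k" "k < n" "coprime k n"
  shows "poly (map_poly of_rat (fibotomic n)) (fib_poly_root n k) = 0"
proof -
  let ?F = "map_poly of_int (fib_poly n) :: rat poly"
  have "?F \<noteq> 0" "lead_coeff ?F = 1"
    using lead_coeff_of_int_fib_poly[where 'a=rat, of n] assms by auto
  then have "prod_mset (prime_factorization ?F) = ?F"
    by (simp add: prod_mset_prime_factorization prime_rat_poly_iff normalize_monic_poly)
  moreover have "poly (map_poly of_rat ?F) (fib_poly_root n k) = 0"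
    using assms by (simp add: map_poly_of_rat_of_int poly_fib_poly_root_eq_0_iff)
  ultimately obtain p where p: "p \<in> prime_factors ?F" "poly (map_poly of_rat p) (fib_poly_root n k) = 0"
    using poly_map_poly_of_rat_prod_mset_eq_0 by metis
  have "\<not> p dvd map_poly of_int (fib_poly j)" if "1 \<le> j" "j < n" for j
  proof
    assume "p dvd map_poly of_int (fib_poly j)"
    then have "map_poly of_rat p dvd (map_poly of_int (fib_poly j) :: complex poly)"
      using map_poly_of_rat_dvd by (fastforce simp: map_poly_of_rat_of_int)
    then have "poly (map_poly of_int (fib_poly j)) (fib_poly_root n k) = 0"
      using p(2) by auto
    then have "n dvd j"
      using assms by (simp add: poly_fib_poly_root_eq_0_iff coprime_commute coprime_dvd_mult_left_iff)
    then show False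
      using that by (simp add: nat_dvd_not_less)
  qed
  then have "p \<in> fibotomic_factors n"
    using p(1) by (auto simp: fibotomic_factors_def in_prime_factors_iff prime_rat_poly_iff)
  then show ?thesis
    using p(2) assms poly_fibotomic_eq_0_iff[of n "fib_poly_root n k"] by auto
qed

lemma totatives_subset_greaterThanLessThan: "n > 1 \<Longrightarrow> totatives n \<subseteq> {0<..<n}"
  using totatives_less by (auto simp: in_totatives_iff)

lemma map_poly_of_rat_fibotomic:
  assumes "n > 1"
  shows "map_poly of_rat (fibotomic n) = (\<Prod>k\<in>totatives n. [:-fib_poly_root n k, 1:] :: complex poly)"
proof -
  let ?M = "map_poly of_rat (fibotomic n) :: complex poly"
  let ?R = "fib_poly_root n ` {0<..<n}"
  have "?M dvd (map_poly of_int (fib_poly n) :: complex poly)"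
    using map_poly_of_rat_dvd[OF fibotomic_dvd_of_int_fib_poly[of n]] assms
    by (simp add: map_poly_of_rat_of_int)
  also have "\<dots> = (\<Prod>r\<in>?R. [:-r, 1:])"
    using assms
    by (simp add: of_int_fib_poly_eq_prod prod.reindex[OF inj_on_fib_poly_root] del: mult_pCons_left)
  finally have "?M = (\<Prod>r\<in>{r\<in>?R. poly ?M r = 0}. [:-r, 1:])"
    by (intro monic_dvd_prod_linear_factors_eq) (simp_all add: lead_coeff_map_poly_nz lead_coeff_fibotomic)
  also have "{r\<in>?R. poly ?M r = 0} = fib_poly_root n ` {k\<in>{0<..<n}. poly ?M (fib_poly_root n k) = 0}"
    by blast
  also have "{k\<in>{0<..<n}. poly ?M (fib_poly_root n k) = 0} = totatives n"
  proof (intro equalityI subsetI)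
    fix k assume "k \<in> {k\<in>{0<..<n}. poly ?M (fib_poly_root n k) = 0}"
    then show "k \<in> totatives n"
      using coprime_if_fibotomic_root[of k n] by (simp add: in_totatives_iff)
  next
    fix k assume "k \<in> totatives n"
    then show "k \<in> {k\<in>{0<..<n}. poly ?M (fib_poly_root n k) = 0}"
      using totatives_subset_greaterThanLessThan[OF assms] fibotomic_root_if_coprime[of k n]
      by (auto simp: in_totatives_iff)
  qed
  also have "(\<Prod>r\<in>fib_poly_root n ` totatives n. [:-r, 1:]) = (\<Prod>k\<in>totatives n. [:-fib_poly_root n k, 1:])"
    using inj_on_subset[OF inj_on_fib_poly_root totatives_subset_greaterThanLessThan[OF assms]]
    by (simp add: prod.reindex del: mult_pCons_left)
  finally show ?thesis .
qed

section \<open>Evaluation at w - 1/w\<close>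

lemma sub_inverse_sub_cos_eq:
  fixes w :: complex
  assumes "w \<noteq> 0"
  shows "w - 1 / w - 2 * \<i> * of_real (cos a) = (w - \<i> * cis a) * (w - \<i> * cis (- a)) / w"
proof -
  have "(w - \<i> * cis a) * (w - \<i> * cis (- a)) = w * w - \<i> * w * (cis a + cis (- a)) - 1"
    by (simp add: algebra_simps cis_mult)
  also have "cis a + cis (- a) = 2 * of_real (cos a)"
    by (simp add: complex_eq_iff)
  finally show ?thesis
    using assms by (simp add: field_simps)
qed

lemma neg_square_sub_cis_double:
  "- (w ^ 2) - cis (2 * a) = - ((w - \<i> * cis a) * (w + \<i> * cis a))"
proof -
  have "cis (2 * a) = cis a * cis a"
    by (simp add: cis_mult)
  then show ?thesis
    by (simp add: algebra_simps power2_eq_square)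
qed

lemma prod_totatives_reflect:
  assumes "n > 1"
  shows "(\<Prod>k\<in>totatives n. f (n - k)) = (\<Prod>k\<in>totatives n. f k)"
proof -
  have "n - k \<in> totatives n \<and> n - (n - k) = k" if "k \<in> totatives n" for k
  proof -
    have "0 < k" "k < n" "coprime k n"
      using that totatives_less[of k n] assms by (auto simp: in_totatives_iff)
    moreover from this have "gcd (n - k) n = gcd k n"
      by (simp add: gcd_diff2_nat)
    ultimately show ?thesis
      by (metis coprime_iff_gcd_eq_1 diff_diff_cancel in_totatives_iff less_imp_le_nat zero_less_diff)
  qed
  then show ?thesis
    by (intro prod.reindex_bij_witness[of _ "\<lambda>k. n - k" "\<lambda>k. n - k"]) auto
qed

lemma prod_totatives_cis_reflect:
  assumes "n > 1"
  shows "(\<Prod>k\<in>totatives n. w - \<i> * cis (- (real k * pi / real n))) =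
           (\<Prod>k\<in>totatives n. w + \<i> * cis (real k * pi / real n))"
proof -
  have "w - \<i> * cis (- (real (n - k) * pi / real n)) = w + \<i> * cis (real k * pi / real n)"
    if "k \<in> totatives n" for k
  proof -
    have "- (real (n - k) * pi / real n) = real k * pi / real n - pi"
      using that assms by (simp add: in_totatives_iff field_simps)
    then show ?thesis
      by (simp add: cis_divide[symmetric])
  qed
  then have "(\<Prod>k\<in>totatives n. w - \<i> * cis (- (real (n - k) * pi / real n))) =
      (\<Prod>k\<in>totatives n. w + \<i> * cis (real k * pi / real n))"
    by (rule prod.cong[OF refl])
  moreover have "(\<Prod>k\<in>totatives n. w - \<i> * cis (- (real (n - k) * pi / real n))) =
      (\<Prod>k\<in>totatives n. w - \<i> * cis (- (real k * pi / real n)))"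
    by (rule prod_totatives_reflect[OF assms])
  ultimately show ?thesis
    by argo
qed

lemma poly_fibotomic_at_sub_inverse:
  fixes w :: complex
  assumes "n > 1" "w \<noteq> 0"
  shows "poly (map_poly of_rat (fibotomic n)) (w - 1 / w) =
           (\<Prod>k\<in>totatives n. w - \<i> * cis (real k * pi / real n)) *
           (\<Prod>k\<in>totatives n. w + \<i> * cis (real k * pi / real n)) / w ^ totient n"
proof -
  have "poly (map_poly of_rat (fibotomic n)) (w - 1 / w) = (\<Prod>k\<in>totatives n. w - 1 / w - fib_poly_root n k)"
    using assms(1) by (simp add: map_poly_of_rat_fibotomic poly_prod)
  also have "\<dots> = (\<Prod>k\<in>totatives n.
      (w - \<i> * cis (real k * pi / real n)) * (w - \<i> * cis (- (real k * pi / real n))) / w)"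
    using assms(2) by (simp add: fib_poly_root_def sub_inverse_sub_cos_eq)
  also have "\<dots> = (\<Prod>k\<in>totatives n. w - \<i> * cis (real k * pi / real n)) *
      (\<Prod>k\<in>totatives n. w - \<i> * cis (- (real k * pi / real n))) / w ^ totient n"
    by (simp add: prod_dividef prod.distrib totient_def)
  finally show ?thesis
    by (simp only: prod_totatives_cis_reflect[OF assms(1)])
qed

lemma poly_cyclotomic_at_neg_square:
  "poly (cyclotomic n) (- (w ^ 2)) =
     (-1) ^ totient n * ((\<Prod>k\<in>totatives n. w - \<i> * cis (real k * pi / real n)) *
                          (\<Prod>k\<in>totatives n. w + \<i> * cis (real k * pi / real n)))"
proof -
  have "{k. 1 \<le> k \<and> k \<le> n \<and> coprime k n} = totatives n"
    by (auto simp: in_totatives_iff)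
  then have "poly (cyclotomic n) (- (w ^ 2)) = (\<Prod>k\<in>totatives n. - (w ^ 2) - cis (2 * pi * real k / real n))"
    unfolding cyclotomic_def poly_prod by (simp add: algebra_simps)
  also have "\<dots> = (\<Prod>k\<in>totatives n. (-1) * ((w - \<i> * cis (real k * pi / real n)) * (w + \<i> * cis (real k * pi / real n))))"
  proof (rule prod.cong[OF refl])
    fix k
    have "2 * pi * real k / real n = 2 * (real k * pi / real n)"
      by simp
    then show "- (w ^ 2) - cis (2 * pi * real k / real n) =
        (-1) * ((w - \<i> * cis (real k * pi / real n)) * (w + \<i> * cis (real k * pi / real n)))"
      by (simp only: neg_square_sub_cis_double) simp
  qed
  finally show ?thesis
    by (simp only: prod.distrib prod_constant totient_def)
qed

lemma sign_totient: "n \<ge> 2 \<Longrightarrow> (if n = 2 then -1 else 1) * (-1) ^ totient n = (1 :: 'a::ring_1)"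
  by (cases "n = 2") (simp_all add: totient_even)

lemma positive_root_sub_inverse:
  fixes x :: real
  defines "\<omega> \<equiv> (x + sqrt (x\<^sup>2 + 4)) / 2"
  shows "\<omega> > 0" "x = \<omega> - 1 / \<omega>"
proof -
  have "\<bar>x\<bar> < sqrt (x\<^sup>2 + 4)"
    by (rule real_less_rsqrt) simp
  then have "0 < x + sqrt (x\<^sup>2 + 4)"
    using abs_ge_minus_self[of x] by linarith
  then show "\<omega> > 0"
    by (simp add: \<omega>_def)
  have "sqrt (x\<^sup>2 + 4) ^ 2 = x\<^sup>2 + 4"
    by simp
  then have "\<omega> * \<omega> = x * \<omega> + 1"
    unfolding \<omega>_def by (simp add: field_simps power2_eq_square)
  then show "x = \<omega> - 1 / \<omega>"
    using \<open>\<omega> > 0\<close> by (simp add: field_simps)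
qed

theorem mainTheorem4:
  fixes n :: nat and x :: real
  assumes "n \<ge> 2"
  defines "\<omega> \<equiv> (x + sqrt (x\<^sup>2 + 4)) / 2"
  shows "complex_of_real (poly (map_poly of_rat (fibotomic n)) x) =
           (if n = 2 then -1 else 1) * poly (cyclotomic n) (complex_of_real (- (\<omega>\<^sup>2)))
             / complex_of_real (\<omega> ^ totient n)"
proof -
  let ?w = "complex_of_real \<omega>"
  have "\<omega> > 0" and x: "x = \<omega> - 1 / \<omega>"
    unfolding \<omega>_def by (rule positive_root_sub_inverse)+
  have "complex_of_real (poly (map_poly of_rat (fibotomic n)) x) =
      poly (map_poly of_rat (fibotomic n)) (?w - 1 / ?w)"
    by (simp add: x of_real_poly_map_poly_of_rat)
  also have "\<dots> = (\<Prod>k\<in>totatives n. ?w - \<i> * cis (real k * pi / real n)) *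
      (\<Prod>k\<in>totatives n. ?w + \<i> * cis (real k * pi / real n)) / ?w ^ totient n"
    using assms(1) \<open>\<omega> > 0\<close> by (intro poly_fibotomic_at_sub_inverse) simp_all
  also have "\<dots> = ((if n = 2 then -1 else 1) * (-1) ^ totient n) *
      ((\<Prod>k\<in>totatives n. ?w - \<i> * cis (real k * pi / real n)) *
       (\<Prod>k\<in>totatives n. ?w + \<i> * cis (real k * pi / real n))) / ?w ^ totient n"
    by (simp only: sign_totient[OF assms(1)] mult_1)
  also have "\<dots> = (if n = 2 then -1 else 1) * poly (cyclotomic n) (- (?w\<^sup>2)) / ?w ^ totient n"
    by (simp only: poly_cyclotomic_at_neg_square mult.assoc)
  finally show ?thesis
    by simp
qed

end
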